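(* Let $n\ge2$ be an integer and $p=n(n+1)$. Consider all pairs $(f,c)$ with $c>0$ and $f$ a real solution on $(-1,1)$ of $(1-s^2)f''-2sf'+pf=0$ that extends continuously to $s=1$ with $f(1)>1$, for which there is a point $x\in(-1,1)$ with $f(x)=h_c(x)$, $f'(x)=h_c'(x)$, and $f>h_c$ on $(x,1]$. Then the smallest $c$ for which such a pair exists is $c=\frac{1+z_p}{1-z_p}$.
   Context: $h_c(s)=\big(\frac{1+s}{2}\big)^p-c^p\big(\frac{1-s}{2}\big)^p$ for $s\in[-1,1]$. $L_n$ denotes the Legendre polynomial $L_n(s)=\frac{1}{2^nn!}\frac{d^n}{ds^n}(s^2-1)^n$ (so $L_n(1)=1$), and $z_p$ is the largest zero of $L_n$ in $(-1,1)$. *)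

theory Defs
  imports "HOL-Analysis.Analysis" "HOL-Computational_Algebra.Polynomial"
begin

definition hc :: "nat \<Rightarrow> real \<Rightarrow> real \<Rightarrow> real" where
  "hc p c s = ((1 + s) / 2) ^ p - c ^ p * ((1 - s) / 2) ^ p"

definition legendre :: "nat \<Rightarrow> real poly" where
  "legendre n = smult (1 / (2 ^ n * fact n)) ((pderiv ^^ n) ([:-1, 0, 1:] ^ n))"

definition legendre_max_zero :: "nat \<Rightarrow> real" where
  "legendre_max_zero n = Max {s \<in> {-1<..<1}. poly (legendre n) s = 0}"

end

theory Submission
  imports Defs
begin

text \<open>
  Let \<open>p = n(n + 1)\<close> and let \<open>z\<close> be the largest zero of the Legendre polynomial \<open>L\<^sub>n\<close> in \<open>(-1, 1)\<close>.
  We show that \<open>c\<^sub>0 = (1 + z)/(1 - z)\<close>, the value for which \<open>h\<^sub>c(z) = 0\<close>, is the least admissible \<open>c\<close>.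

  The proof has four parts.
  (1) Algebra of \<open>L\<^sub>n\<close>: by Rodrigues' formula it solves the Legendre equation; a nonzero polynomial
      solution has only simple roots in \<open>(-1, 1)\<close> and does not vanish at \<open>1\<close>; \<open>L\<^sub>n\<close> has a root in
      \<open>(-1, 1)\<close>.  Normalising its sign gives a solution \<open>P\<close> with \<open>P(z) = 0 < P'(z)\<close>, \<open>P > 0\<close> on \<open>(z, 1]\<close>.
  (2) Abel's identity: the weighted Wronskian \<open>(1 - s\<^sup>2)(P f' - P' f)\<close> of two solutions is constant,
      and it vanishes when \<open>f\<close> is continuous at \<open>1\<close>, so such \<open>f\<close> is proportional to \<open>P\<close>.
  (3) The same Wronskian \<open>K\<close> of \<open>P\<close> and \<open>h\<^sub>c\<close> has derivative \<open>p\<^sup>2 P \<delta>\<close>, where the defect \<open>\<delta>\<close> changes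
      sign once, from negative to positive; with \<open>K(1) = 0\<close> this controls the sign of \<open>K\<close> on \<open>[z, 1]\<close>.
  (4) For \<open>c\<^sub>0\<close> the tangent multiple of \<open>P\<close> at \<open>z\<close> lies above \<open>h\<^sub>c\<^sub>0\<close> on \<open>(z, 1]\<close>, so \<open>c\<^sub>0\<close> is admissible;
      conversely for an admissible \<open>c\<close> the touching solution vanishes at \<open>z\<close>, and either case of the
      position of the touching point forces \<open>h\<^sub>c(z) \<le> 0\<close>, i.e. \<open>c \<ge> c\<^sub>0\<close>.
\<close>

lemma one_minus_sq_pos:
  fixes s :: real assumes "-1 < s" "s < 1" shows "0 < 1 - s\<^sup>2"
  using assms by (simp add: abs_square_less_1)

definition legendre_eq :: "real poly \<Rightarrow> real \<Rightarrow> bool" where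
  "legendre_eq Q \<mu> \<longleftrightarrow>
     (\<forall>x. (1 - x\<^sup>2) * poly (pderiv (pderiv Q)) x - 2 * x * poly (pderiv Q) x + \<mu> * poly Q x = 0)"

lemma legendre_eq_smult:
  assumes "legendre_eq Q \<mu>" shows "legendre_eq (smult a Q) \<mu>"
  unfolding legendre_eq_def
proof
  fix x
  have "a * ((1 - x\<^sup>2) * poly (pderiv (pderiv Q)) x - 2 * x * poly (pderiv Q) x + \<mu> * poly Q x) = 0"
    using assms by (simp add: legendre_eq_def)
  then show "(1 - x\<^sup>2) * poly (pderiv (pderiv (smult a Q))) x - 2 * x * poly (pderiv (smult a Q)) x
      + \<mu> * poly (smult a Q) x = 0"
    by (simp add: pderiv_smult algebra_simps)
qed

lemma higher_pderiv_Suc: "(pderiv^^(Suc k)) Q = pderiv ((pderiv^^k) Q)"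
  by simp

lemma rodrigues_base:
  "[:-1,0,1:] * pderiv ([:-1,0,1:]^n) = smult (2 * real n) ([:0,1:] * [:-1,0,1::real:]^n)"
proof (cases n)
  case (Suc m)
  have "pderiv [:-1,0,1::real:] = smult 2 [:0,1:]" by (simp add: pderiv_pCons)
  then show ?thesis unfolding Suc pderiv_power_Suc by (simp add: mult_ac)
qed simp

text \<open>Differentiating the identity above \<open>k + 1\<close> times (Leibniz rule).  For \<open>k = n\<close> this is
  the Legendre equation for \<open>y\<^sup>(\<^sup>n\<^sup>)\<close>.\<close>
lemma rodrigues_derivs:
  fixes y :: "real poly" and n k :: nat
  defines "y \<equiv> [:-1,0,1:]^n"
  shows "[:-1,0,1:] * (pderiv^^(k+2)) y + smult (2 * real k + 2) ([:0,1:] * (pderiv^^(k+1)) y)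
           + smult (real k * real k + real k) ((pderiv^^k) y)
         = smult (2 * real n) ([:0,1:] * (pderiv^^(k+1)) y + smult (real k + 1) ((pderiv^^k) y))"
proof (induction k)
  case 0
  have "pderiv ([:-1,0,1:] * pderiv y) = pderiv (smult (2 * real n) ([:0,1:] * y))"
    using rodrigues_base[of n] unfolding y_def by simp
  then have "poly (pderiv ([:-1,0,1:] * pderiv y)) x = poly (pderiv (smult (2 * real n) ([:0,1:] * y))) x"
    for x by simp
  then show ?case
    by (intro poly_ext)
       (simp add: pderiv_mult pderiv_smult pderiv_pCons pderiv_diff pderiv_minus, simp add: algebra_simps)
next
  case (Suc k)
  from arg_cong[OF Suc.IH, of pderiv] have
    "poly (pderiv ([:-1,0,1:] * (pderiv^^(k+2)) y + smult (2 * real k + 2) ([:0,1:] * (pderiv^^(k+1)) y)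
        + smult (real k * real k + real k) ((pderiv^^k) y))) x
     = poly (pderiv (smult (2 * real n) ([:0,1:] * (pderiv^^(k+1)) y
        + smult (real k + 1) ((pderiv^^k) y)))) x" for x
    by simp
  then show ?case
    by (intro poly_ext) (simp add: pderiv_mult pderiv_smult pderiv_pCons pderiv_add pderiv_diff
        pderiv_minus del: funpow.simps, simp add: algebra_simps)
qed

lemma legendre_solves_legendre_eq: "legendre_eq (legendre n) (real (n * (n + 1)))"
  unfolding legendre_eq_def
proof
  fix x :: real
  define y :: "real poly" where "y = [:-1,0,1:]^n"
  define a :: real where "a = 1 / (2 ^ n * fact n)"
  have L: "legendre n = smult a ((pderiv^^n) y)" by (simp add: legendre_def a_def y_def)
  have "poly ([:-1,0,1:] * (pderiv^^(n+2)) y + smult (2 * real n + 2) ([:0,1:] * (pderiv^^(n+1)) y)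
           + smult (real n * real n + real n) ((pderiv^^n) y)) x
        = poly (smult (2 * real n) ([:0,1:] * (pderiv^^(n+1)) y + smult (real n + 1) ((pderiv^^n) y))) x"
    using rodrigues_derivs[of n n] unfolding y_def by simp
  then have "a * ((1 - x\<^sup>2) * poly ((pderiv^^(n+2)) y) x - 2 * x * poly ((pderiv^^(n+1)) y) x
               + (real n * real n + real n) * poly ((pderiv^^n) y) x) = 0"
    by (simp del: funpow.simps add: algebra_simps power2_eq_square)
  then show "(1 - x\<^sup>2) * poly (pderiv (pderiv (legendre n))) x - 2 * x * poly (pderiv (legendre n)) x
      + real (n * (n + 1)) * poly (legendre n) x = 0"
    by (simp add: L pderiv_smult algebra_simps)
qed

text \<open>The \<open>k\<close>-th derivative of a solution of the Legendre equation satisfies a shifted equation;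
  this propagates vanishing of consecutive derivatives and drives the root analysis below.\<close>
lemma legendre_eq_derivs:
  assumes "legendre_eq Q \<mu>"
  shows "(1 - x\<^sup>2) * poly ((pderiv^^(k+2)) Q) x - 2 * (real k + 1) * x * poly ((pderiv^^(k+1)) Q) x
           + (\<mu> - real k * real k - real k) * poly ((pderiv^^k) Q) x = 0"
proof (induction k arbitrary: x)
  case 0
  then show ?case using assms by (simp add: legendre_eq_def numeral_2_eq_2)
next
  case (Suc k)
  define A where "A = [:1,0,-1:] * (pderiv^^(k+2)) Q - smult (2 * real k + 2) ([:0,1:] * (pderiv^^(k+1)) Q)
     + smult (\<mu> - real k * real k - real k) ((pderiv^^k) Q)"
  have "poly A = poly 0"
  proof
    fix x show "poly A x = poly 0 x" using Suc.IH[of x] unfolding A_def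
      by (simp del: funpow.simps add: algebra_simps power2_eq_square)
  qed
  then have "poly (pderiv A) x = 0" by (simp only: poly_eq_poly_eq_iff) simp
  then show ?case unfolding A_def
    by (simp add: pderiv_mult pderiv_smult pderiv_pCons pderiv_add pderiv_diff pderiv_minus
        algebra_simps power2_eq_square higher_pderiv_Suc[symmetric] del: funpow.simps)
qed

lemma poly_eq_0_if_all_derivs_vanish:
  fixes Q :: "real poly"
  assumes "\<And>k. poly ((pderiv^^k) Q) x = 0"
  shows "Q = 0"
  using assms
proof (induction "degree Q" arbitrary: Q rule: less_induct)
  case less
  show ?case
  proof (cases "degree Q = 0")
    case True
    then obtain a where "Q = [:a:]" by (metis degree_eq_zeroE)
    with less.prems[of 0] show ?thesis by simp
  next
    case False
    have "pderiv Q = 0"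
    proof (rule less.hyps)
      show "degree (pderiv Q) < degree Q" using False by (simp add: degree_pderiv)
      show "poly ((pderiv^^k) (pderiv Q)) x = 0" for k
        using less.prems[of "Suc k"] by (simp add: funpow_Suc_right del: funpow.simps)
    qed
    with False show ?thesis by (simp add: pderiv_eq_0_iff)
  qed
qed

text \<open>Inside \<open>(-1, 1)\<close> the leading coefficient \<open>1 - x\<^sup>2\<close> is nonzero, so every root of a nonzero
  polynomial solution is simple.\<close>
lemma legendre_eq_simple_root:
  assumes Q: "legendre_eq Q \<mu>" "Q \<noteq> 0" and x: "-1 < x" "x < 1" "poly Q x = 0"
  shows "poly (pderiv Q) x \<noteq> 0"
proof
  assume d: "poly (pderiv Q) x = 0"
  have "poly ((pderiv^^k) Q) x = 0 \<and> poly ((pderiv^^(k+1)) Q) x = 0" for k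
  proof (induction k)
    case (Suc k)
    have "(1 - x\<^sup>2) * poly ((pderiv^^(k+2)) Q) x = 0"
      using legendre_eq_derivs[OF Q(1), of x k] Suc.IH by simp
    with one_minus_sq_pos[OF x(1,2)] Suc.IH show ?case by simp
  qed (use x d in simp)
  then have "Q = 0" by (intro poly_eq_0_if_all_derivs_vanish[of Q x]) blast
  with Q show False by simp
qed

text \<open>At the singular point \<open>x = 1\<close> the equation reads \<open>-2(k+1) Q\<^sup>(\<^sup>k\<^sup>+\<^sup>1\<^sup>)(1) + \<dots> Q\<^sup>(\<^sup>k\<^sup>)(1) = 0\<close>,
  so a nonzero polynomial solution cannot vanish at \<open>1\<close>.\<close>
lemma legendre_eq_nonzero_at_1:
  assumes Q: "legendre_eq Q \<mu>" "Q \<noteq> 0"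
  shows "poly Q 1 \<noteq> 0"
proof
  assume r: "poly Q 1 = 0"
  have "poly ((pderiv^^k) Q) 1 = 0" for k
  proof (induction k)
    case (Suc k)
    then show ?case using legendre_eq_derivs[OF Q(1), of 1 k] by simp
  qed (use r in simp)
  then have "Q = 0" by (intro poly_eq_0_if_all_derivs_vanish[of Q 1]) blast
  with Q show False by simp
qed

text \<open>\<open>L\<^sub>n\<close> has degree \<open>n\<close>, being the \<open>n\<close>-th derivative of a polynomial of degree \<open>2n\<close>.\<close>
lemma legendre_nonzero:
  assumes "n \<ge> 1" shows "legendre n \<noteq> 0"
proof -
  have "degree ((pderiv^^k) Q) = degree Q - k" for k and Q :: "real poly"
    by (induction k) (simp_all add: degree_pderiv)
  moreover have "degree ([:-1,0,1::real:]^n) = 2 * n" by (simp add: degree_power_eq)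
  ultimately have "degree ((pderiv^^n) ([:-1,0,1::real:]^n)) = n" by simp
  then show ?thesis using assms unfolding legendre_def by auto
qed

lemma root_power_dvd_higher_pderiv:
  fixes Q :: "real poly"
  assumes "[:-a,1:]^m dvd Q" "k \<le> m" shows "[:-a,1:]^(m-k) dvd (pderiv^^k) Q"
  using assms(2)
proof (induction k)
  case (Suc k)
  then have "[:-a,1:]^(Suc (m - Suc k)) dvd (pderiv^^k) Q" using Suc_diff_Suc by fastforce
  then obtain T where T: "(pderiv^^k) Q = [:-a,1:]^(Suc (m - Suc k)) * T" by (elim dvdE)
  have "[:-a,1:]^(m - Suc k) dvd [:-a,1:]^(Suc (m - Suc k)) * pderiv T"
    by (rule dvd_mult2[OF le_imp_power_dvd]) simp
  moreover have "[:-a,1:]^(m - Suc k) dvd smult (of_nat (Suc (m - Suc k))) (T * [:-a,1:]^(m - Suc k))"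
    by (simp add: dvd_smult)
  ultimately show ?case unfolding higher_pderiv_Suc T lemma_order_pderiv1 by (rule dvd_add)
qed (use assms in simp)

text \<open>\<open>y\<^sup>(\<^sup>n\<^sup>-\<^sup>1\<^sup>)\<close> vanishes at \<open>\<plusminus>1\<close>, so Rolle's theorem yields a root of \<open>L\<^sub>n\<close> in \<open>(-1, 1)\<close>.\<close>
lemma legendre_has_root:
  assumes "n \<ge> 1" shows "\<exists>s. -1 < s \<and> s < 1 \<and> poly (legendre n) s = 0"
proof -
  define Y :: "real poly" where "Y = (pderiv^^(n-1)) ([:-1,0,1:]^n)"
  have "[:-1,0,1::real:] = [:-1,1:] * [:-(-1),1:]" by simp
  then have fac: "[:-1,0,1::real:]^n = [:-1,1:]^n * [:-(-1),1:]^n"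
    by (metis power_mult_distrib)
  have "[:-1,1:]^(n-(n-1)) dvd Y" "[:-(-1),1:]^(n-(n-1)) dvd Y"
    unfolding Y_def by (rule root_power_dvd_higher_pderiv; simp add: fac)+
  then have "poly Y 1 = 0" "poly Y (-1) = 0"
    using assms poly_eq_0_iff_dvd[of Y 1] poly_eq_0_iff_dvd[of Y "-1"] by simp_all
  moreover have "continuous_on {-1..1} (poly Y)" by (auto intro!: continuous_intros)
  moreover have "poly Y differentiable at x" for x
    using poly_DERIV real_differentiable_def by blast
  ultimately obtain s where s: "-1 < s" "s < 1" "(poly Y has_real_derivative 0) (at s)"
    using Rolle[of "-1" 1 "poly Y"] by auto
  have "poly (pderiv Y) s = 0" using DERIV_unique[OF poly_DERIV s(3)] .
  moreover have "pderiv Y = (pderiv^^n) ([:-1,0,1:]^n)"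
  proof -
    have "Suc (n - 1) = n" using assms by simp
    then show ?thesis unfolding Y_def higher_pderiv_Suc[symmetric] by (rule arg_cong)
  qed
  ultimately have "poly (legendre n) s = 0" by (simp add: legendre_def)
  with s show ?thesis by blast
qed

locale legendre_top_zero =
  fixes P :: "real poly" and \<mu> :: real and z :: real
  assumes eq: "legendre_eq P \<mu>"
    and z_between: "-1 < z" "z < 1"
    and root: "poly P z = 0"
    and slope: "poly (pderiv P) z > 0"
    and pos: "\<And>s. z < s \<Longrightarrow> s \<le> 1 \<Longrightarrow> poly P s > 0"

text \<open>Multiplying \<open>L\<^sub>n\<close> by the sign of \<open>L\<^sub>n(1)\<close> gives such data at its largest zero in \<open>(-1, 1)\<close>.\<close>
lemma legendre_top_zero_exists:
  assumes n: "n \<ge> 1"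
  obtains P where "legendre_top_zero P (real (n * (n + 1))) (legendre_max_zero n)"
proof
  define L where "L = legendre n"
  define z where "z = legendre_max_zero n"
  define Z where "Z = {s \<in> {-1<..<1}. poly L s = 0}"
  define P where "P = smult (sgn (poly L 1)) L"
  have L: "legendre_eq L (real (n * (n + 1)))" "L \<noteq> 0"
    unfolding L_def using n legendre_solves_legendre_eq legendre_nonzero by blast+
  have "finite Z" unfolding Z_def
    by (rule finite_subset[OF _ poly_roots_finite[OF L(2)]]) auto
  moreover have "Z \<noteq> {}" unfolding Z_def L_def using legendre_has_root[OF n] by auto
  ultimately have z_in: "z \<in> Z" and z_max: "\<And>s. s \<in> Z \<Longrightarrow> s \<le> z"
    unfolding z_def legendre_max_zero_def Z_def[unfolded L_def, symmetric] by simp_all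
  have L1: "poly L 1 \<noteq> 0" by (rule legendre_eq_nonzero_at_1[OF L])
  then have P1: "poly P 1 > 0" unfolding P_def by (simp add: sgn_real_def)
  have P_eq: "legendre_eq P (real (n * (n + 1)))" unfolding P_def by (rule legendre_eq_smult[OF L(1)])
  have roots: "poly P s = 0 \<longleftrightarrow> poly L s = 0" for s unfolding P_def using L1 by (simp add: sgn_real_def)
  have z: "-1 < z" "z < 1" "poly P z = 0" using z_in roots unfolding Z_def by auto
  have pos: "poly P s > 0" if s: "z < s" "s \<le> 1" for s
  proof (rule ccontr)
    assume "\<not> poly P s > 0"
    have "\<exists>t. s \<le> t \<and> t < 1 \<and> poly P t = 0"
    proof (cases "poly P s = 0")
      case True
      with P1 s have "s < 1" by (cases "s = 1") auto
      with True show ?thesis by blast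
    next
      case False
      with \<open>\<not> poly P s > 0\<close> have "poly P s < 0" by simp
      moreover from this P1 s have "s < 1" by (cases "s = 1") auto
      ultimately show ?thesis using poly_IVT_pos[of s 1 P] P1 less_imp_le by blast
    qed
    then obtain t where "s \<le> t" "t < 1" "poly P t = 0" by blast
    then have "t \<in> Z" using roots s z unfolding Z_def by auto
    with z_max \<open>s \<le> t\<close> s show False by force
  qed
  have "P \<noteq> 0" using P1 by auto
  then have "poly (pderiv P) z \<noteq> 0" by (rule legendre_eq_simple_root[OF P_eq _ z])
  moreover have "\<not> poly (pderiv P) z < 0"
  proof
    assume "poly (pderiv P) z < 0"
    from DERIV_neg_dec_right[OF poly_DERIV this] obtain d where
      d: "d > 0" "\<And>h. h > 0 \<Longrightarrow> h < d \<Longrightarrow> poly P (z + h) < poly P z" by blast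
    define h where "h = min (d / 2) (1 - z)"
    have "0 < h" "h < d" "z + h \<le> 1" using d z unfolding h_def by (auto simp: min_def)
    with d(2)[of h] pos[of "z + h"] z show False by simp
  qed
  ultimately show "legendre_top_zero P (real (n * (n + 1))) (legendre_max_zero n)"
    unfolding legendre_top_zero_def z_def[symmetric] using P_eq z pos by auto
qed

definition legendre_solution ::
    "real \<Rightarrow> (real \<Rightarrow> real) \<Rightarrow> (real \<Rightarrow> real) \<Rightarrow> (real \<Rightarrow> real) \<Rightarrow> bool" where
  "legendre_solution \<mu> f f' f'' \<longleftrightarrow>
     (\<forall>s \<in> {-1<..<1}. (f has_real_derivative f' s) (at s) \<and> (f' has_real_derivative f'' s) (at s)
                     \<and> (1 - s\<^sup>2) * f'' s - 2 * s * f' s + \<mu> * f s = 0)"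

lemma legendre_solution_poly:
  assumes "legendre_eq Q \<mu>"
  shows "legendre_solution \<mu> (\<lambda>s. a * poly Q s) (\<lambda>s. a * poly (pderiv Q) s)
           (\<lambda>s. a * poly (pderiv (pderiv Q)) s)"
  using legendre_eq_smult[OF assms, of a]
  unfolding legendre_solution_def legendre_eq_def
  by (auto intro!: DERIV_cmult poly_DERIV simp: pderiv_smult)

lemma weighted_wronskian_has_derivative:
  assumes P: "legendre_eq P \<mu>"
    and g: "(g has_real_derivative g' s) (at s)" "(g' has_real_derivative g'' s) (at s)"
  shows "((\<lambda>s. (1 - s\<^sup>2) * (poly P s * g' s - poly (pderiv P) s * g s)) has_real_derivative
           poly P s * ((1 - s\<^sup>2) * g'' s - 2 * s * g' s + \<mu> * g s)) (at s)"
proof -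
  have "((\<lambda>s. (1 - s\<^sup>2) * (poly P s * g' s - poly (pderiv P) s * g s)) has_real_derivative
           poly P s * ((1 - s\<^sup>2) * g'' s - 2 * s * g' s + \<mu> * g s)
           - g s * ((1 - s\<^sup>2) * poly (pderiv (pderiv P)) s - 2 * s * poly (pderiv P) s + \<mu> * poly P s))
         (at s)"
    by (auto intro!: derivative_eq_intros poly_DERIV g simp: algebra_simps power2_eq_square)
  moreover have "(1 - s\<^sup>2) * poly (pderiv (pderiv P)) s - 2 * s * poly (pderiv P) s + \<mu> * poly P s = 0"
    using P unfolding legendre_eq_def by blast
  ultimately show ?thesis by simp
qed

lemma legendre_abel_identity:
  assumes P: "legendre_eq P \<mu>" and f: "legendre_solution \<mu> f f' f''"
  obtains C where
    "\<And>s. -1 < s \<Longrightarrow> s < 1 \<Longrightarrow> (1 - s\<^sup>2) * (poly P s * f' s - poly (pderiv P) s * f s) = C"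
proof -
  define W where "W s = (1 - s\<^sup>2) * (poly P s * f' s - poly (pderiv P) s * f s)" for s
  have "(W has_real_derivative 0) (at s)" if "s \<in> {-1<..<1}" for s
    using weighted_wronskian_has_derivative[OF P, of f f' s f''] f that
    unfolding legendre_solution_def W_def by auto
  then obtain C where "\<forall>x\<in>{-1<..<1}. W x = C"
    using has_field_derivative_zero_constant[of "{-1<..<1}" W]
    by (metis convex_real_interval(8) has_field_derivative_at_within)
  with that show ?thesis unfolding W_def by auto
qed

text \<open>A function whose derivative is at least \<open>k / (1 - s)\<close>, \<open>k > 0\<close>, grows like \<open>-k log (1 - s)\<close>
  and so has no finite limit at \<open>1\<close>.\<close>
lemma no_left_limit_of_log_growth:
  fixes g g' :: "real \<Rightarrow> real"
  assumes a: "a < 1" and k: "k > 0"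
    and dg: "\<And>s. a < s \<Longrightarrow> s < 1 \<Longrightarrow> (g has_real_derivative g' s) (at s)"
    and lb: "\<And>s. a < s \<Longrightarrow> s < 1 \<Longrightarrow> g' s \<ge> k / (1 - s)"
  shows "\<not> (g \<longlongrightarrow> l) (at_left 1)"
proof
  assume lim: "(g \<longlongrightarrow> l) (at_left 1)"
  define t0 where "t0 = (a + 1) / 2"
  have t0: "a < t0" "t0 < 1" using a unfolding t0_def by auto
  define \<psi> where "\<psi> s = g s + k * ln (1 - s)" for s
  have mono: "\<psi> t0 \<le> \<psi> s" if s: "t0 \<le> s" "s < 1" for s
  proof (rule DERIV_nonneg_imp_nondecreasing[OF s(1)])
    fix x assume "t0 \<le> x" "x \<le> s"
    then have x: "a < x" "x < 1" using t0 s by auto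
    have "(\<psi> has_real_derivative g' x - k / (1 - x)) (at x)"
      unfolding \<psi>_def using x by (auto intro!: derivative_eq_intros dg simp: field_simps)
    moreover have "0 \<le> g' x - k / (1 - x)" using lb[OF x] by simp
    ultimately show "\<exists>y. (\<psi> has_real_derivative y) (at x) \<and> 0 \<le> y" by blast
  qed
  define M where "M = (\<psi> t0 - l - 1) / k"
  have "eventually (\<lambda>s. dist (g s) l < 1) (at_left 1)" using tendstoD[OF lim, of 1] by simp
  moreover have "eventually (\<lambda>s. s \<in> {max t0 (1 - exp M)<..<1}) (at_left 1)"
    using t0 by (intro eventually_at_left_real) simp
  ultimately obtain s where s: "dist (g s) l < 1" "s \<in> {max t0 (1 - exp M)<..<1}"
    using eventually_happens'[OF trivial_limit_at_left_real eventually_conj] by blast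
  then have "ln (1 - s) < ln (exp M)" by (subst ln_less_cancel_iff) auto
  then have "ln (1 - s) < M" by simp
  then have "k * ln (1 - s) < \<psi> t0 - l - 1" using k unfolding M_def by (simp add: field_simps)
  moreover have "\<psi> t0 \<le> g s + k * ln (1 - s)" using mono[of s] s unfolding \<psi>_def by simp
  ultimately show False using s by (simp add: dist_real_def abs_less_iff)
qed

text \<open>Elementary bound behind the logarithmic growth: for \<open>0 < q \<le> B\<close> and \<open>s \<in> (-1, 1)\<close>,
  \<open>K/((1 - s\<^sup>2) q\<^sup>2) \<ge> (K/(2 B\<^sup>2))/(1 - s)\<close>, since \<open>1 - s\<^sup>2 \<le> 2(1 - s)\<close>.\<close>
lemma weight_lower_bound:
  fixes K q B s :: real
  assumes K: "0 \<le> K" and q: "0 < q" "q \<le> B" and s: "-1 < s" "s < 1"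
  shows "(K / (2 * B\<^sup>2)) / (1 - s) \<le> K / ((1 - s\<^sup>2) * q\<^sup>2)"
proof -
  have "0 < 1 - s\<^sup>2" using one_minus_sq_pos[OF s] .
  moreover have "1 - s\<^sup>2 \<le> 2 * (1 - s)"
    using zero_le_square[of "1 - s"] by (simp add: power2_eq_square algebra_simps)
  moreover have "q\<^sup>2 \<le> B\<^sup>2" using q by (intro power_mono) auto
  ultimately have "(1 - s\<^sup>2) * q\<^sup>2 \<le> (2 * (1 - s)) * B\<^sup>2" by (intro mult_mono) auto
  then have "K / ((2 * (1 - s)) * B\<^sup>2) \<le> K / ((1 - s\<^sup>2) * q\<^sup>2)"
    by (rule divide_left_mono) (use K q s \<open>0 < 1 - s\<^sup>2\<close> in \<open>auto intro!: mult_pos_pos\<close>)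
  moreover have "(K / (2 * B\<^sup>2)) / (1 - s) = K / ((2 * (1 - s)) * B\<^sup>2)" by simp
  ultimately show ?thesis by linarith
qed

text \<open>Every solution continuous at \<open>1\<close> is proportional to \<open>P\<close>: the constant in Abel's
  identity must vanish, for otherwise \<open>f/P\<close> would grow logarithmically near \<open>1\<close>.\<close>
lemma (in legendre_top_zero) wronskian_vanishes:
  assumes f: "legendre_solution \<mu> f f' f''" and lim: "(f \<longlongrightarrow> f 1) (at_left 1)"
    and s: "-1 < s" "s < 1"
  shows "poly P s * f' s = poly (pderiv P) s * f s"
proof -
  obtain C where C:
    "\<And>s. -1 < s \<Longrightarrow> s < 1 \<Longrightarrow> (1 - s\<^sup>2) * (poly P s * f' s - poly (pderiv P) s * f s) = C"
    using legendre_abel_identity[OF eq f] by blast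
  have "C = 0"
  proof (rule ccontr)
    assume "C \<noteq> 0"
    have "compact (poly P ` {z..1})" by (intro compact_continuous_image continuous_intros) simp
    then obtain B where B: "B > 0" "\<And>x. x \<in> {z..1} \<Longrightarrow> norm (poly P x) \<le> B"
      using compact_imp_bounded bounded_pos by (metis imageI)
    define g where "g s = sgn C * (f s / poly P s)" for s
    define g' where "g' s = \<bar>C\<bar> / ((1 - s\<^sup>2) * (poly P s)\<^sup>2)" for s
    have dg: "(g has_real_derivative g' s) (at s)" if s: "z < s" "s < 1" for s
    proof -
      have sI: "-1 < s" "s < 1" and Ps: "poly P s > 0" using s z_between pos by auto
      have "(f has_real_derivative f' s) (at s)" using f sI unfolding legendre_solution_def by auto
      then have "(g has_real_derivative
          sgn C * ((f' s * poly P s - f s * poly (pderiv P) s) / (poly P s * poly P s))) (at s)"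
        unfolding g_def using Ps by (intro DERIV_cmult DERIV_divide poly_DERIV) auto
      moreover have "f' s * poly P s - f s * poly (pderiv P) s = C / (1 - s\<^sup>2)"
        using C[OF sI] one_minus_sq_pos[OF sI] by (simp add: field_simps)
      ultimately show ?thesis
        unfolding g'_def by (simp add: abs_sgn power2_eq_square divide_divide_eq_left mult.commute)
    qed
    have "g' s \<ge> (\<bar>C\<bar> / (2 * B\<^sup>2)) / (1 - s)" if s: "z < s" "s < 1" for s
      unfolding g'_def using pos[of s] B(2)[of s] s z_between by (intro weight_lower_bound) auto
    moreover have "(g \<longlongrightarrow> sgn C * (f 1 / poly P 1)) (at_left 1)"
      unfolding g_def using pos[of 1] z_between by (intro tendsto_intros lim) auto
    moreover have "0 < \<bar>C\<bar> / (2 * B\<^sup>2)" using \<open>C \<noteq> 0\<close> B(1) by simp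
    ultimately show False
      using no_left_limit_of_log_growth[OF z_between(2), of "\<bar>C\<bar> / (2 * B\<^sup>2)" g g'] dg by blast
  qed
  then show ?thesis using C[OF s] one_minus_sq_pos[OF s] by simp
qed

definition hc_d1 :: "nat \<Rightarrow> real \<Rightarrow> real \<Rightarrow> real" where
  "hc_d1 p c s = real p / 2 * (((1 + s) / 2) ^ (p - 1) + c ^ p * ((1 - s) / 2) ^ (p - 1))"

definition hc_d2 :: "nat \<Rightarrow> real \<Rightarrow> real \<Rightarrow> real" where
  "hc_d2 p c s = real p * (real p - 1) / 4 * (((1 + s) / 2) ^ (p - 2) - c ^ p * ((1 - s) / 2) ^ (p - 2))"

text \<open>The defect of \<open>h\<^sub>c\<close> as a solution of the Legendre equation, up to the factor \<open>p\<^sup>2\<close>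
  (see \<open>legendre_operator_hc\<close>): \<open>u v (u^(p-2) - c^p v^(p-2))\<close>.\<close>
definition hc_defect :: "nat \<Rightarrow> real \<Rightarrow> real \<Rightarrow> real" where
  "hc_defect p c s =
     (1 + s) / 2 * ((1 - s) / 2) * (((1 + s) / 2) ^ (p - 2) - c ^ p * ((1 - s) / 2) ^ (p - 2))"

text \<open>\<open>h\<^sub>c' = hc_d1\<close> and \<open>hc_d1' = h\<^sub>c''\<close> (the latter needs \<open>p \<ge> 2\<close> because of truncated subtraction).\<close>
lemma hc_has_derivative: "(hc p c has_real_derivative hc_d1 p c s) (at s)"
  unfolding hc_def[abs_def] hc_d1_def
  by (auto intro!: derivative_eq_intros simp: algebra_simps)

lemma hc_d1_has_derivative:
  assumes "p \<ge> 2" shows "(hc_d1 p c has_real_derivative hc_d2 p c s) (at s)"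
proof -
  obtain q where q: "p = q + 2" using assms by (metis add.commute le_Suc_ex)
  have d1: "((\<lambda>s. (1 + s) / 2) has_real_derivative 1 / 2) (at s)"
    and d2: "((\<lambda>s. (1 - s) / 2) has_real_derivative - 1 / 2) (at s)"
    by (auto intro!: derivative_eq_intros)
  have "(hc_d1 p c has_real_derivative real p / 2 * (real (p - 1) * (1 / 2 * ((1 + s) / 2) ^ (p - 1 - Suc 0))
          + c ^ p * (real (p - 1) * (- 1 / 2 * ((1 - s) / 2) ^ (p - 1 - Suc 0))))) (at s)"
    unfolding hc_d1_def[abs_def] by (intro DERIV_add DERIV_cmult DERIV_power d1 d2)
  moreover have "real p / 2 * (real (p - 1) * (1 / 2 * ((1 + s) / 2) ^ (p - 1 - Suc 0))
          + c ^ p * (real (p - 1) * (- 1 / 2 * ((1 - s) / 2) ^ (p - 1 - Suc 0)))) = hc_d2 p c s"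
  proof -
    define A where "A = ((1 + s) / 2) ^ q"
    define B where "B = ((1 - s) / 2) ^ q"
    show ?thesis unfolding hc_d2_def q A_def[symmetric] B_def[symmetric]
      by simp (simp add: algebra_simps)
  qed
  ultimately show ?thesis by simp
qed

lemma legendre_operator_hc:
  assumes "p \<ge> 2"
  shows "(1 - s\<^sup>2) * hc_d2 p c s - 2 * s * hc_d1 p c s + real p * hc p c s = (real p)\<^sup>2 * hc_defect p c s"
proof -
  obtain q where q: "p = q + 2" using assms by (metis add.commute le_Suc_ex)
  define u where "u = (1 + s) / 2"
  define v where "v = (1 - s) / 2"
  define U where "U = u ^ q"
  define V where "V = v ^ q"
  have powers: "u ^ (q + 2) = u * u * U" "u ^ (q + 1) = u * U" "v ^ (q + 2) = v * v * V" "v ^ (q + 1) = v * V"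
    unfolding U_def V_def by (simp_all add: power_add power2_eq_square)
  have "(1 - s\<^sup>2) * hc_d2 p c s - 2 * s * hc_d1 p c s + real p * hc p c s
      = (1 - s\<^sup>2) * (real p * (real p - 1) / 4 * (U - c ^ p * V))
        - 2 * s * (real p / 2 * (u * U + c ^ p * (v * V))) + real p * (u * u * U - c ^ p * (v * v * V))"
    unfolding hc_d2_def hc_d1_def hc_def unfolding q u_def[symmetric] v_def[symmetric]
    by (simp add: powers U_def V_def)
  also have "\<dots> = (real p)\<^sup>2 * (u * v * (U - c ^ p * V))"
    unfolding u_def v_def by (simp add: field_simps power2_eq_square)
  also have "\<dots> = (real p)\<^sup>2 * hc_defect p c s"
    unfolding hc_defect_def q u_def[symmetric] v_def[symmetric] U_def V_def by simp
  finally show ?thesis .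
qed

text \<open>The defect changes sign at most once on \<open>(-1, 1)\<close>, from negative to positive:
  \<open>u^(p-2) - c^p v^(p-2)\<close> is strictly increasing in \<open>s\<close>.\<close>
lemma hc_defect_single_crossing:
  assumes p: "p \<ge> 3" and c: "c > 0" and st: "-1 < s" "s < t" "t < 1"
    and s_nonneg: "hc_defect p c s \<ge> 0"
  shows "hc_defect p c t > 0"
proof -
  have uv: "(1 + s) / 2 > 0" "(1 - s) / 2 > 0" "(1 + t) / 2 > 0" "(1 - t) / 2 > 0" using st by auto
  have "0 < (1 + s) / 2 * ((1 - s) / 2)" using uv by simp
  then have "((1 + s) / 2) ^ (p - 2) - c ^ p * ((1 - s) / 2) ^ (p - 2) \<ge> 0"
    using s_nonneg unfolding hc_defect_def by (metis mult_pos_neg not_le)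
  moreover have "((1 + s) / 2) ^ (p - 2) < ((1 + t) / 2) ^ (p - 2)"
    using uv st p by (intro power_strict_mono) auto
  moreover have "((1 - t) / 2) ^ (p - 2) < ((1 - s) / 2) ^ (p - 2)"
    using uv st p by (intro power_strict_mono) auto
  then have "c ^ p * ((1 - t) / 2) ^ (p - 2) < c ^ p * ((1 - s) / 2) ^ (p - 2)" using c by simp
  ultimately have "((1 + t) / 2) ^ (p - 2) - c ^ p * ((1 - t) / 2) ^ (p - 2) > 0" by linarith
  then show ?thesis using uv unfolding hc_defect_def by simp
qed

lemma hc_nonpos_imp_ge:
  fixes z c :: real
  assumes z: "-1 < z" "z < 1" and c: "c > 0" and p: "p \<ge> 1" and h: "hc p c z \<le> 0"
  shows "(1 + z) / (1 - z) \<le> c"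
proof -
  have "((1 + z) / 2) ^ p \<le> c ^ p * ((1 - z) / 2) ^ p" using h unfolding hc_def by simp
  then have "((1 + z) / 2) ^ p \<le> (c * ((1 - z) / 2)) ^ p" by (simp only: power_mult_distrib)
  moreover obtain q where "p = Suc q" using p by (cases p) auto
  ultimately have "((1 + z) / 2) ^ Suc q \<le> (c * ((1 - z) / 2)) ^ Suc q" by simp
  then have "(1 + z) / 2 \<le> c * ((1 - z) / 2)"
    by (rule power_le_imp_le_base) (use c z in simp)
  then show ?thesis using z by (simp add: pos_divide_le_eq field_simps)
qed

lemma hc_critical_zero:
  fixes z :: real
  assumes "z < 1" shows "hc p ((1 + z) / (1 - z)) z = 0"
proof -
  have "(1 + z) / (1 - z) * ((1 - z) / 2) = (1 + z) / 2" using assms by (simp add: field_simps)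
  then show ?thesis unfolding hc_def by (metis power_mult_distrib diff_self)
qed

definition hc_wronskian :: "real poly \<Rightarrow> nat \<Rightarrow> real \<Rightarrow> real \<Rightarrow> real" where
  "hc_wronskian P p c s = (1 - s\<^sup>2) * (poly P s * hc_d1 p c s - poly (pderiv P) s * hc p c s)"

lemma hc_wronskian_has_derivative:
  assumes P: "legendre_eq P (real p)" and p: "p \<ge> 2"
  shows "(hc_wronskian P p c has_real_derivative poly P s * ((real p)\<^sup>2 * hc_defect p c s)) (at s)"
proof -
  have "((\<lambda>s. (1 - s\<^sup>2) * (poly P s * hc_d1 p c s - poly (pderiv P) s * hc p c s)) has_real_derivative
      poly P s * ((1 - s\<^sup>2) * hc_d2 p c s - 2 * s * hc_d1 p c s + real p * hc p c s)) (at s)"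
    using p by (intro weighted_wronskian_has_derivative[OF P] hc_has_derivative hc_d1_has_derivative) auto
  then show ?thesis unfolding hc_wronskian_def[abs_def] legendre_operator_hc[OF p] .
qed

text \<open>A differentiable function whose derivative, once nonnegative, stays positive has no interior
  maximum: if it does not drop from \<open>a\<close> to \<open>t\<close>, it strictly rises from \<open>t\<close> to \<open>b\<close>.\<close>
lemma single_crossing_rise:
  fixes g g' :: "real \<Rightarrow> real"
  assumes at: "a < t" and tb: "t < b"
    and dg: "\<And>s. a \<le> s \<Longrightarrow> s \<le> b \<Longrightarrow> (g has_real_derivative g' s) (at s)"
    and cross: "\<And>s u. a < s \<Longrightarrow> s < u \<Longrightarrow> u < b \<Longrightarrow> g' s \<ge> 0 \<Longrightarrow> g' u > 0"
    and no_drop: "g a \<le> g t"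
  shows "g t < g b"
proof -
  obtain \<eta> where \<eta>: "a < \<eta>" "\<eta> < t" "g t - g a = (t - a) * g' \<eta>"
    using MVT2[OF at, of g g'] dg tb by auto
  then have "(t - a) * g' \<eta> \<ge> 0" using no_drop by simp
  then have "g' \<eta> \<ge> 0" using at by (simp add: zero_le_mult_iff)
  obtain \<xi> where \<xi>: "t < \<xi>" "\<xi> < b" "g b - g t = (b - t) * g' \<xi>"
    using MVT2[OF tb, of g g'] dg at by auto
  have "g' \<xi> > 0" using cross[of \<eta> \<xi>] \<eta> \<xi> \<open>g' \<eta> \<ge> 0\<close> by auto
  then have "(b - t) * g' \<xi> > 0" using tb by simp
  with \<xi> show ?thesis by simp
qed

lemma quotient_tendsto_at_common_zero:
  fixes D Q :: "real \<Rightarrow> real"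
  assumes D: "(D has_real_derivative D') (at z)" "D z = 0"
    and Q: "(Q has_real_derivative Q') (at z)" "Q z = 0" "Q' \<noteq> 0"
  shows "((\<lambda>s. D s / Q s) \<longlongrightarrow> D' / Q') (at z)"
proof -
  have "((\<lambda>s. ((D s - D z) / (s - z)) / ((Q s - Q z) / (s - z))) \<longlongrightarrow> D' / Q') (at z)"
    using D(1) Q(1,3) unfolding has_field_derivative_iff by (intro tendsto_divide)
  moreover have "((D s - D z) / (s - z)) / ((Q s - Q z) / (s - z)) = D s / Q s" for s
    using D(2) Q(2) by (cases "s = z") simp_all
  ultimately show ?thesis by simp
qed

lemma pos_if_increasing_from_zero:
  fixes R :: "real \<Rightarrow> real"
  assumes lim: "(R \<longlongrightarrow> 0) (at_right z)"
    and mono: "\<And>l u. z < l \<Longrightarrow> l < u \<Longrightarrow> u \<le> b \<Longrightarrow> R l < R u"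
    and y: "z < y" "y \<le> b"
  shows "R y > 0"
proof -
  define s where "s = (z + y) / 2"
  have s: "z < s" "s < y" using y unfolding s_def by auto
  have "0 \<le> R s"
  proof (rule tendsto_upperbound[OF lim _ trivial_limit_at_right_real])
    show "eventually (\<lambda>t. R t \<le> R s) (at_right z)"
      using eventually_at_right_real[OF s(1)]
      by (rule eventually_mono) (use mono s y in force)
  qed
  also have "R s < R y" using mono[OF s y(2)] .
  finally show ?thesis .
qed

locale legendre_top_zero_hc = legendre_top_zero P "real p" z for P p z +
  assumes p_ge_3: "3 \<le> p"
begin

lemma hc_wronskian_at_1: "hc_wronskian P p c 1 = 0"
  unfolding hc_wronskian_def by simp

lemma hc_wronskian_at_z: "hc_wronskian P p c z = - ((1 - z\<^sup>2) * poly (pderiv P) z * hc p c z)"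
  unfolding hc_wronskian_def using root by (simp add: mult.assoc)

text \<open>On \<open>[z, 1]\<close> the derivative \<open>p\<^sup>2 P \<delta>\<close> of the comparison function inherits the single sign change
  of the defect \<open>\<delta>\<close>, because \<open>P > 0\<close> on \<open>(z, 1]\<close>.\<close>
lemma hc_wronskian_rise:
  assumes c: "c > 0" and "z \<le> a" "a < t" "t < b" "b \<le> 1"
    and "hc_wronskian P p c a \<le> hc_wronskian P p c t"
  shows "hc_wronskian P p c t < hc_wronskian P p c b"
proof (rule single_crossing_rise[where g = "hc_wronskian P p c"
      and g' = "\<lambda>s. poly P s * ((real p)\<^sup>2 * hc_defect p c s)"])
  show "(hc_wronskian P p c has_real_derivative poly P s * ((real p)\<^sup>2 * hc_defect p c s)) (at s)"
    if "a \<le> s" "s \<le> b" for s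
    using p_ge_3 by (intro hc_wronskian_has_derivative eq) auto
next
  fix s u assume su: "a < s" "s < u" "u < b"
    and "0 \<le> poly P s * ((real p)\<^sup>2 * hc_defect p c s)"
  moreover have "poly P s > 0" "poly P u > 0" "real p > 0" using su assms pos p_ge_3 by auto
  ultimately have "hc_defect p c s \<ge> 0" by (simp add: zero_le_mult_iff)
  moreover have "-1 < s" using su assms z_between by linarith
  ultimately have "hc_defect p c u > 0"
    using hc_defect_single_crossing[OF p_ge_3 c, of s u] su assms by linarith
  then show "0 < poly P u * ((real p)\<^sup>2 * hc_defect p c u)"
    using \<open>poly P u > 0\<close> \<open>real p > 0\<close> by simp
qed (use assms in auto)

lemma hc_neg_at_z_if_wronskian_vanishes:
  assumes c: "c > 0" and x: "z < x" "x < 1" and Kx: "hc_wronskian P p c x = 0"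
  shows "hc p c z < 0"
proof -
  have "hc_wronskian P p c z > 0"
  proof (rule ccontr)
    assume "\<not> hc_wronskian P p c z > 0"
    then have "hc_wronskian P p c x < hc_wronskian P p c 1"
      using Kx x by (intro hc_wronskian_rise[OF c]) auto
    then show False using Kx hc_wronskian_at_1 by simp
  qed
  then have "(1 - z\<^sup>2) * poly (pderiv P) z * hc p c z < (1 - z\<^sup>2) * poly (pderiv P) z * 0"
    using hc_wronskian_at_z by simp
  moreover have "(1 - z\<^sup>2) * poly (pderiv P) z > 0"
    using one_minus_sq_pos[OF z_between] slope by simp
  ultimately show ?thesis by (simp only: mult_less_cancel_left_pos)
qed

lemma hc_wronskian_neg:
  assumes c: "c > 0" and Kz: "hc_wronskian P p c z = 0" and t: "z < t" "t < 1"
  shows "hc_wronskian P p c t < 0"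
proof (cases "hc_wronskian P p c z \<le> hc_wronskian P p c t")
  case True
  then show ?thesis using hc_wronskian_rise[OF c _ t(1) t(2)] hc_wronskian_at_1 by auto
qed (use Kz in simp)

text \<open>Where the comparison function \<open>K\<close> is negative, \<open>h\<^sub>c/P\<close> decreases: \<open>(h\<^sub>c/P)' = K/((1 - s\<^sup>2) P\<^sup>2)\<close>.\<close>
lemma hc_over_P_decreasing:
  assumes K_neg: "\<And>s. z < s \<Longrightarrow> s < 1 \<Longrightarrow> hc_wronskian P p c s < 0"
    and lu: "z < l" "l < u" "u \<le> 1"
  shows "hc p c u / poly P u < hc p c l / poly P l"
proof (rule DERIV_neg_imp_decreasing_open[OF lu(2)])
  fix x assume x: "l < x" "x < u"
  then have Px: "poly P x > 0" using lu pos by auto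
  have "((\<lambda>s. hc p c s / poly P s) has_real_derivative
      (hc_d1 p c x * poly P x - hc p c x * poly (pderiv P) x) / (poly P x * poly P x)) (at x)"
    using Px by (intro DERIV_divide hc_has_derivative poly_DERIV) auto
  moreover have "hc_d1 p c x * poly P x - hc p c x * poly (pderiv P) x < 0"
  proof -
    have "(1 - x\<^sup>2) * (hc_d1 p c x * poly P x - hc p c x * poly (pderiv P) x) < 0"
      using K_neg[of x] x lu unfolding hc_wronskian_def by (simp add: mult.commute)
    moreover have "1 - x\<^sup>2 > 0" using x lu z_between by (intro one_minus_sq_pos) auto
    ultimately show ?thesis by (simp add: mult_less_0_iff)
  qed
  ultimately show "\<exists>y. ((\<lambda>s. hc p c s / poly P s) has_real_derivative y) (at x) \<and> y < 0"
    using Px by (auto simp: divide_neg_pos)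
next
  have "\<forall>x\<in>{l..u}. poly P x \<noteq> 0"
  proof
    fix x assume "x \<in> {l..u}"
    then have "poly P x > 0" using lu by (intro pos) auto
    then show "poly P x \<noteq> 0" by simp
  qed
  then show "continuous_on {l..u} (\<lambda>s. hc p c s / poly P s)"
    unfolding hc_def by (intro continuous_on_divide continuous_intros) simp_all
qed

text \<open>At the critical value \<open>c\<^sub>0 = (1 + z)/(1 - z)\<close>, where \<open>h\<^sub>c\<^sub>0(z) = 0\<close>, the multiple \<open>a P\<close> of \<open>P\<close>
  tangent to \<open>h\<^sub>c\<^sub>0\<close> at \<open>z\<close> lies strictly above \<open>h\<^sub>c\<^sub>0\<close> on \<open>(z, 1]\<close>: the relative gap \<open>(a P - h\<^sub>c\<^sub>0)/P\<close>
  tends to \<open>0\<close> at \<open>z\<close> and increases, since the comparison function vanishes at \<open>z\<close> and so is negative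
  on \<open>(z, 1)\<close>.\<close>
lemma tangent_multiple_above_critical_hc:
  defines "c0 \<equiv> (1 + z) / (1 - z)"
  defines "a \<equiv> hc_d1 p c0 z / poly (pderiv P) z"
  assumes y: "z < y" "y \<le> 1"
  shows "hc p c0 y < a * poly P y"
proof -
  define R where "R s = (a * poly P s - hc p c0 s) / poly P s" for s
  have c0: "c0 > 0" and hz: "hc p c0 z = 0"
    using z_between hc_critical_zero[of z p] unfolding c0_def by auto
  have "hc_wronskian P p c0 z = 0" using hc_wronskian_at_z hz by simp
  then have K_neg: "hc_wronskian P p c0 s < 0" if "z < s" "s < 1" for s
    using hc_wronskian_neg[OF c0 _ that] by blast
  have R_eq: "R s = a - hc p c0 s / poly P s" if "z < s" "s \<le> 1" for s
    using pos[OF that] unfolding R_def by (simp add: diff_divide_distrib)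
  have mono: "R l < R u" if "z < l" "l < u" "u \<le> 1" for l u
    using hc_over_P_decreasing[OF K_neg that] R_eq that by simp
  have "((\<lambda>s. a * poly P s - hc p c0 s) has_real_derivative a * poly (pderiv P) z - hc_d1 p c0 z) (at z)"
    by (intro DERIV_diff DERIV_cmult poly_DERIV hc_has_derivative)
  then have "(R \<longlongrightarrow> (a * poly (pderiv P) z - hc_d1 p c0 z) / poly (pderiv P) z) (at z)"
    unfolding R_def using slope root hz by (intro quotient_tendsto_at_common_zero poly_DERIV) auto
  moreover have "a * poly (pderiv P) z - hc_d1 p c0 z = 0" unfolding a_def using slope by simp
  ultimately have "(R \<longlongrightarrow> 0) (at_right z)" by (simp add: filterlim_at_split)
  then have "R y > 0" using pos_if_increasing_from_zero mono y by blast
  then show ?thesis using pos[OF y] unfolding R_def by (simp add: zero_less_divide_iff)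
qed

text \<open>The critical value \<open>(1 + z)/(1 - z)\<close> is admissible, witnessed by the tangent multiple of \<open>P\<close>.\<close>
lemma critical_value_admissible:
  defines "c0 \<equiv> (1 + z) / (1 - z)"
  shows "\<exists>f f' f''. legendre_solution (real p) f f' f'' \<and> (f \<longlongrightarrow> f 1) (at_left 1) \<and> f 1 > 1
           \<and> (\<exists>x \<in> {-1<..<1}. f x = hc p c0 x \<and> f' x = deriv (hc p c0) x
                               \<and> (\<forall>y \<in> {x<..1}. f y > hc p c0 y))"
proof -
  define a where "a = hc_d1 p c0 z / poly (pderiv P) z"
  define f where "f s = a * poly P s" for s
  define f' where "f' s = a * poly (pderiv P) s" for s
  define f'' where "f'' s = a * poly (pderiv (pderiv P)) s" for s
  have above: "f y > hc p c0 y" if "z < y" "y \<le> 1" for y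
    using tangent_multiple_above_critical_hc[OF that] unfolding f_def a_def c0_def .
  have "legendre_solution (real p) f f' f''"
    unfolding f_def[abs_def] f'_def[abs_def] f''_def[abs_def] by (rule legendre_solution_poly[OF eq])
  moreover have "(f \<longlongrightarrow> f 1) (at_left 1)" unfolding f_def by (intro tendsto_intros)
  moreover have "hc p c0 1 = 1" using p_ge_3 by (simp add: hc_def)
  then have "f 1 > 1" using above[of 1] z_between by simp
  moreover have "f z = hc p c0 z" using root hc_critical_zero[of z p] z_between
    unfolding f_def c0_def by simp
  moreover have "f' z = deriv (hc p c0) z"
    using DERIV_imp_deriv[OF hc_has_derivative] slope
    unfolding f'_def a_def by simp
  ultimately show ?thesis using above z_between
    by (intro exI[of _ f] exI[of _ f'] exI[of _ f''] conjI bexI[of _ z]) auto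
qed

text \<open>The solution is proportional to \<open>P\<close>, so it
  vanishes at \<open>z\<close>; if it touches \<open>h\<^sub>c\<close> left of \<open>z\<close> then \<open>h\<^sub>c(z) < f(z) = 0\<close>, and if it touches
  right of \<open>z\<close>, the comparison function vanishes there and again \<open>h\<^sub>c(z) < 0\<close>.\<close>
lemma critical_value_minimal:
  assumes c: "c > 0"
    and f: "legendre_solution (real p) f f' f''" and lim: "(f \<longlongrightarrow> f 1) (at_left 1)"
    and x: "-1 < x" "x < 1" and touch: "f x = hc p c x" "f' x = deriv (hc p c) x"
    and above: "\<forall>y \<in> {x<..1}. f y > hc p c y"
  shows "(1 + z) / (1 - z) \<le> c"
proof -
  have W: "poly P s * f' s = poly (pderiv P) s * f s" if "-1 < s" "s < 1" for s
    using wronskian_vanishes[OF f lim that] .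
  have "f z = 0" using W[OF z_between] root slope by simp
  have "hc p c z \<le> 0"
  proof (cases "z < x")
    case True
    have "deriv (hc p c) x = hc_d1 p c x"
      using DERIV_imp_deriv[OF hc_has_derivative] by simp
    then have "hc_wronskian P p c x = 0"
      unfolding hc_wronskian_def using W[OF x] touch by simp
    then show ?thesis using hc_neg_at_z_if_wronskian_vanishes[OF c True x(2)] by simp
  next
    case False
    then have "x = z \<or> z \<in> {x<..1}" using z_between by auto
    then have "f z \<ge> hc p c z" using above touch by (auto intro: less_imp_le)
    then show ?thesis using \<open>f z = 0\<close> by simp
  qed
  with p_ge_3 show ?thesis by (intro hc_nonpos_imp_ge[OF z_between c]) simp_all
qed

end

theorem theorem5p2:
  fixes n :: nat
  assumes "n \<ge> 2"
  defines "p \<equiv> n * (n + 1)"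
  defines "S \<equiv> {c :: real. c > 0 \<and>
       (\<exists>(f :: real \<Rightarrow> real) f' f''.
          (\<forall>s \<in> {-1<..<1}. (f has_real_derivative f' s) (at s)
                          \<and> (f' has_real_derivative f'' s) (at s)
                          \<and> (1 - s\<^sup>2) * f'' s - 2 * s * f' s + real p * f s = 0)
        \<and> (f \<longlongrightarrow> f 1) (at_left 1)
        \<and> f 1 > 1
        \<and> (\<exists>x \<in> {-1<..<1}. f x = hc p c x \<and> f' x = deriv (hc p c) x
                            \<and> (\<forall>y \<in> {x<..1}. f y > hc p c y)))}"
  defines "z \<equiv> legendre_max_zero n"
  shows "(1 + z) / (1 - z) \<in> S \<and> (\<forall>c \<in> S. (1 + z) / (1 - z) \<le> c)"
proof -
  have "3 \<le> p" using mult_le_mono[of 2 n 3 "n + 1"] assms(1) unfolding p_def by simp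
  obtain P where "legendre_top_zero P (real p) z"
    using legendre_top_zero_exists[of n] assms(1) unfolding p_def z_def by auto
  then interpret legendre_top_zero_hc P p z
    using \<open>3 \<le> p\<close> by (simp add: legendre_top_zero_hc_def legendre_top_zero_hc_axioms_def)
  have "(1 + z) / (1 - z) > 0" using z_between by simp
  then have "(1 + z) / (1 - z) \<in> S"
    unfolding S_def mem_Collect_eq using critical_value_admissible[unfolded legendre_solution_def]
    by (intro conjI)
  moreover have "(1 + z) / (1 - z) \<le> c" if "c \<in> S" for c
  proof -
    from that obtain f f' f'' x where "c > 0" "legendre_solution (real p) f f' f''"
      "(f \<longlongrightarrow> f 1) (at_left 1)" "x \<in> {-1<..<1}" "f x = hc p c x" "f' x = deriv (hc p c) x"
      "\<forall>y \<in> {x<..1}. f y > hc p c y"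
      unfolding S_def legendre_solution_def by blast
    then show ?thesis by (intro critical_value_minimal[of c f f' f'' x]) auto
  qed
  ultimately show ?thesis by blast
qed

end
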